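(* Let $I\subseteq S=\Bbbk[x_1,\dots,x_n]$ be a squarefree monomial ideal and let $L$ be its squarefree lexification. Then $L\subseteq(x_1)$ if and only if $I\subseteq(x_i)$ for some variable $x_i$.
   Context: Let $\Bbbk$ be a field, $S=\Bbbk[x_1,\dots,x_n]$, $R=S/(x_1^2,\dots,x_n^2)$. A monomial ideal is squarefree if its minimal monomial generators are squarefree. A monomial ideal of $R$ is lex if each degree component is spanned by an initial segment, in the lexicographic order with $x_1>\dots>x_n$, of the squarefree monomials of that degree. A squarefree monomial ideal $L\subseteq S$ is squarefree lex if $LR$ is lex in $R$. The squarefree lexification of a squarefree monomial ideal $I\subseteq S$ is the unique squarefree lex ideal $L\subseteq S$ having the same Hilbert function as $I$ in $S$ (equivalently, $LR$ is the lex ideal of $R$ with the same Hilbert function as $IR$). *)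

theory Defs
  imports Main
begin

text \<open>Monomials of S = k[x_1,...,x_n] are encoded as exponent vectors
  a :: nat => nat with a i = 0 for i >= n; variable x_(i+1) has index i.
  A monomial ideal of S is encoded by the set of monomials it contains
  (it is the k-span of these). Divisibility of monomials is pointwise order.\<close>

definition monomials :: "nat \<Rightarrow> (nat \<Rightarrow> nat) set" where
  "monomials n = {a. \<forall>i\<ge>n. a i = 0}"

definition mdeg :: "nat \<Rightarrow> (nat \<Rightarrow> nat) \<Rightarrow> nat" where
  "mdeg n a = (\<Sum>i<n. a i)"

definition is_monomial_ideal :: "nat \<Rightarrow> (nat \<Rightarrow> nat) set \<Rightarrow> bool" where
  "is_monomial_ideal n M \<longleftrightarrow> M \<subseteq> monomials n \<and>
     (\<forall>a\<in>M. \<forall>b\<in>monomials n. a \<le> b \<longrightarrow> b \<in> M)"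

definition min_generators :: "nat \<Rightarrow> (nat \<Rightarrow> nat) set \<Rightarrow> (nat \<Rightarrow> nat) set" where
  "min_generators n M = {a\<in>M. \<forall>b\<in>M. b \<le> a \<longrightarrow> b = a}"

definition sqfree_mon :: "(nat \<Rightarrow> nat) \<Rightarrow> bool" where
  "sqfree_mon a \<longleftrightarrow> (\<forall>i. a i \<le> 1)"

definition is_sqfree_monomial_ideal :: "nat \<Rightarrow> (nat \<Rightarrow> nat) set \<Rightarrow> bool" where
  "is_sqfree_monomial_ideal n M \<longleftrightarrow> is_monomial_ideal n M \<and>
     (\<forall>a\<in>min_generators n M. sqfree_mon a)"

text \<open>Hilbert function of the ideal in S: dim_k of its degree-d component
  = number of monomials of degree d in it.\<close>
definition hilb :: "nat \<Rightarrow> (nat \<Rightarrow> nat) set \<Rightarrow> nat \<Rightarrow> nat" where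
  "hilb n M d = card {a\<in>M. mdeg n a = d}"

definition sqmon :: "nat set \<Rightarrow> (nat \<Rightarrow> nat)" where
  "sqmon A = (\<lambda>i. if i \<in> A then 1 else 0)"

text \<open>Lex order (x_1 > ... > x_n) on squarefree monomials of equal degree:
  x^B >lex x^A iff the smallest index in the symmetric difference lies in B.\<close>
definition sq_lex_gt :: "nat set \<Rightarrow> nat set \<Rightarrow> bool" where
  "sq_lex_gt B A \<longleftrightarrow> A \<noteq> B \<and> Min ((A - B) \<union> (B - A)) \<in> B"

text \<open>L R is lex in R = S/(x_1^2,...,x_n^2): the squarefree monomials of
  each degree d lying in L form an initial lex segment.\<close>
definition is_sqfree_lex :: "nat \<Rightarrow> (nat \<Rightarrow> nat) set \<Rightarrow> bool" where
  "is_sqfree_lex n L \<longleftrightarrow> is_sqfree_monomial_ideal n L \<and>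
     (\<forall>A B. A \<subseteq> {..<n} \<and> B \<subseteq> {..<n} \<and> card A = card B \<and>
        sqmon A \<in> L \<and> sq_lex_gt B A \<longrightarrow> sqmon B \<in> L)"

definition is_sqfree_lexification :: "nat \<Rightarrow> (nat \<Rightarrow> nat) set \<Rightarrow> (nat \<Rightarrow> nat) set \<Rightarrow> bool" where
  "is_sqfree_lexification n I L \<longleftrightarrow> is_sqfree_lex n L \<and> (\<forall>d. hilb n L d = hilb n I d)"

definition var_ideal :: "nat \<Rightarrow> nat \<Rightarrow> (nat \<Rightarrow> nat) set" where
  "var_ideal n i = {a\<in>monomials n. 1 \<le> a i}"

end

theory Submission
  imports Defs
begin

(* A squarefree monomial ideal M of S = k[x_1..x_n] is determined by
   its Stanley-Reisner complex, the sets F of variables with x^F not in M (the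
   faces of M): a monomial lies outside M iff its support is a face.  Grouping
   the degree-D monomials outside M by their support gives
       #(degree-D monomials outside M) = sum_j f_j(M) * g_j(D),
   where f_j(M) counts faces of size j and g_j(D) counts degree-D monomials with a
   fixed support of size j.  As g_j(D) = 0 for D < j and g_j(j) > 0 this system is
   triangular, so the Hilbert function of M determines all face counts f_j(M).
   Next, M lies in some (x_i) iff M has a face of size n - 1 or n, i.e. iff
   f_(n-1)(M) + f_n(M) > 0; hence I and its lexification L agree on this property.
   Finally, for a lex ideal L, lying in some (x_i) already forces L to lie in (x_1),
   since x^({..<n}-{0}) is lex-smaller than every other x^({..<n}-{i}). *)

definition supp :: "(nat \<Rightarrow> nat) \<Rightarrow> nat set" where
  "supp b = {i. b i \<noteq> 0}"

definition monomials_deg :: "nat \<Rightarrow> nat \<Rightarrow> (nat \<Rightarrow> nat) set" where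
  "monomials_deg n D = {b \<in> monomials n. mdeg n b = D}"

lemma supp_subset_vars: "b \<in> monomials n \<Longrightarrow> supp b \<subseteq> {..<n}"
  by (auto simp: supp_def monomials_def) (metis not_le less_irrefl)

lemma mdeg_eq_sum_over_supp:
  assumes "b \<in> monomials n" "supp b \<subseteq> S" "S \<subseteq> {..<n}"
  shows "mdeg n b = sum b S"
  unfolding mdeg_def
  by (rule sum.mono_neutral_left[symmetric]) (use assms in \<open>auto simp: supp_def\<close>)

text \<open>There are finitely many monomials of each degree: restriction to the first
  n exponents embeds them into lists over {..D} of length n.\<close>
lemma finite_monomials_deg: "finite (monomials_deg n D)"
proof -
  let ?code = "\<lambda>b. map b [0..<n]"
  have "inj_on ?code (monomials_deg n D)"
  proof
    fix b c assume "b \<in> monomials_deg n D" "c \<in> monomials_deg n D" "?code b = ?code c"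
    then show "b = c"
      by (auto simp: monomials_deg_def monomials_def map_eq_conv fun_eq_iff)
  qed
  moreover have "?code ` monomials_deg n D \<subseteq> {xs. set xs \<subseteq> {..D} \<and> length xs = n}"
  proof clarsimp
    fix b i assume b: "b \<in> monomials_deg n D" and "i < n"
    then have "b i \<le> (\<Sum>i<n. b i)" by (intro member_le_sum) auto
    then show "b i \<le> D" using b by (simp add: monomials_deg_def mdeg_def)
  qed
  then have "finite (?code ` monomials_deg n D)"
    by (rule finite_subset) (rule finite_lists_length_eq, simp)
  ultimately show ?thesis by (simp add: finite_image_iff)
qed

lemma sqmon_supp_le: "sqmon (supp b) \<le> b"
  by (auto simp: le_fun_def sqmon_def supp_def)

lemma sqmon_mono: "A \<subseteq> B \<Longrightarrow> sqmon A \<le> sqmon B"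
  by (auto simp: le_fun_def sqmon_def)

lemma sqmon_in_monomials: "A \<subseteq> {..<n} \<Longrightarrow> sqmon A \<in> monomials n"
  by (auto simp: monomials_def sqmon_def)

lemma supp_sqmon: "supp (sqmon A) = A"
  by (auto simp: supp_def sqmon_def)

section \<open>Squarefree monomial ideals and their faces\<close>

text \<open>Every element of a monomial ideal is a multiple of a minimal generator:
  take a divisor in the ideal of least degree.\<close>
lemma min_generator_below:
  assumes M: "is_monomial_ideal n M" and a: "a \<in> M"
  shows "\<exists>g\<in>min_generators n M. g \<le> a"
proof -
  define P where "P = (\<lambda>k. \<exists>c\<in>M. c \<le> a \<and> mdeg n c = k)"
  have "P (mdeg n a)" using a by (auto simp: P_def)
  then obtain k where Pk: "P k" and least: "\<And>k'. P k' \<Longrightarrow> k \<le> k'"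
    using ex_has_least_nat[of P "mdeg n a" id] by auto
  then obtain c where c: "c \<in> M" "c \<le> a" "mdeg n c = k" by (auto simp: P_def)
  have "c \<in> min_generators n M"
    unfolding min_generators_def
  proof (intro CollectI conjI ballI impI, fact)
    fix b assume b: "b \<in> M" "b \<le> c"
    then have "P (mdeg n b)" using c by (auto simp: P_def intro: order_trans)
    then have "mdeg n c \<le> mdeg n b" using least c by auto
    moreover have bm: "b \<in> monomials n" "c \<in> monomials n" using M b c
      by (auto simp: is_monomial_ideal_def)
    moreover have "\<And>i. b i \<le> c i" using b by (auto simp: le_fun_def)
    ultimately have "\<forall>i\<in>{..<n}. b i = c i"
      unfolding mdeg_def
      by (metis finite_lessThan sum_strict_mono_ex1 not_less order.order_iff_strict)
    then show "b = c" using bm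
      by (auto simp: monomials_def fun_eq_iff) (metis lessThan_iff not_less)
  qed
  then show ?thesis using c by auto
qed

lemma sqfree_ideal_mem_iff_supp:
  assumes M: "is_sqfree_monomial_ideal n M" and b: "b \<in> monomials n"
  shows "b \<in> M \<longleftrightarrow> sqmon (supp b) \<in> M"
proof
  have MI: "is_monomial_ideal n M" using M by (simp add: is_sqfree_monomial_ideal_def)
  have sm: "sqmon (supp b) \<in> monomials n" using supp_subset_vars[OF b] by (rule sqmon_in_monomials)
  show "sqmon (supp b) \<in> M" if "b \<in> M"
  proof -
    obtain g where g: "g \<in> min_generators n M" "g \<le> b"
      using min_generator_below[OF MI \<open>b \<in> M\<close>] by blast
    have "sqfree_mon g" using M g by (auto simp: is_sqfree_monomial_ideal_def)
    then have "g \<le> sqmon (supp b)"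
      using g(2) by (auto simp: le_fun_def sqfree_mon_def sqmon_def supp_def) (metis le_zero_eq)
    moreover have "g \<in> M" using g by (simp add: min_generators_def)
    ultimately show ?thesis using MI sm by (auto simp: is_monomial_ideal_def)
  qed
  show "b \<in> M" if "sqmon (supp b) \<in> M"
    using that MI b sqmon_supp_le[of b] by (auto simp: is_monomial_ideal_def)
qed

definition faces :: "nat \<Rightarrow> (nat \<Rightarrow> nat) set \<Rightarrow> nat set set" where
  "faces n M = {F. F \<subseteq> {..<n} \<and> sqmon F \<notin> M}"

definition face_count :: "nat \<Rightarrow> (nat \<Rightarrow> nat) set \<Rightarrow> nat \<Rightarrow> nat" where
  "face_count n M j = card {F \<in> faces n M. card F = j}"

lemma finite_faces: "finite (faces n M)"
  by (rule finite_subset[of _ "Pow {..<n}"]) (auto simp: faces_def)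

lemma card_face_le: "F \<in> faces n M \<Longrightarrow> card F \<le> n"
  unfolding faces_def using card_mono[of "{..<n}" F] by auto

text \<open>Faces are closed under taking subsets, since M is closed under multiples.\<close>
lemma faces_subset_closed:
  assumes M: "is_monomial_ideal n M" and F: "F \<in> faces n M" and G: "G \<subseteq> F"
  shows "G \<in> faces n M"
proof -
  have "sqmon F \<in> M" if "sqmon G \<in> M"
    using that M sqmon_mono[OF G] sqmon_in_monomials[of F n] F
    by (auto simp: is_monomial_ideal_def faces_def)
  then show ?thesis using F G by (auto simp: faces_def)
qed

lemma sqfree_ideal_subset_var_ideal_iff:
  assumes M: "is_sqfree_monomial_ideal n M" and i: "i < n"
  shows "M \<subseteq> var_ideal n i \<longleftrightarrow> {..<n} - {i} \<in> faces n M"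
proof
  assume "M \<subseteq> var_ideal n i"
  then show "{..<n} - {i} \<in> faces n M" by (auto simp: var_ideal_def sqmon_def faces_def)
next
  assume face: "{..<n} - {i} \<in> faces n M"
  have MI: "is_monomial_ideal n M" using M by (simp add: is_sqfree_monomial_ideal_def)
  show "M \<subseteq> var_ideal n i"
  proof
    fix b assume bM: "b \<in> M"
    then have b: "b \<in> monomials n" using MI by (auto simp: is_monomial_ideal_def)
    show "b \<in> var_ideal n i"
    proof (rule ccontr)
      assume "b \<notin> var_ideal n i"
      then have "supp b \<subseteq> {..<n} - {i}"
        using b supp_subset_vars[OF b] by (auto simp: var_ideal_def supp_def)
      then have "supp b \<in> faces n M" using faces_subset_closed[OF MI face] by blast
      then show False using sqfree_ideal_mem_iff_supp[OF M b] bM by (simp add: faces_def)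
    qed
  qed
qed

lemma sqfree_ideal_in_some_var_iff_face_count:
  assumes M: "is_sqfree_monomial_ideal n M" and n: "1 \<le> n"
  shows "(\<exists>i<n. M \<subseteq> var_ideal n i) \<longleftrightarrow> face_count n M (n - 1) \<noteq> 0 \<or> face_count n M n \<noteq> 0"
proof -
  have MI: "is_monomial_ideal n M" using M by (simp add: is_sqfree_monomial_ideal_def)
  have fin: "\<And>j. finite {F \<in> faces n M. card F = j}" using finite_faces by auto
  have "(\<exists>i<n. M \<subseteq> var_ideal n i) \<longleftrightarrow> (\<exists>F\<in>faces n M. n - 1 \<le> card F)"
  proof
    assume "\<exists>i<n. M \<subseteq> var_ideal n i"
    then obtain i where "i < n" "M \<subseteq> var_ideal n i" by auto
    then show "\<exists>F\<in>faces n M. n - 1 \<le> card F"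
      using sqfree_ideal_subset_var_ideal_iff[OF M] by (intro bexI[of _ "{..<n} - {i}"]) auto
  next
    assume "\<exists>F\<in>faces n M. n - 1 \<le> card F"
    then obtain F where F: "F \<in> faces n M" "n - 1 \<le> card F" by auto
    have Fn: "F \<subseteq> {..<n}" using F by (simp add: faces_def)
    have "\<exists>i<n. {..<n} - {i} \<subseteq> F"
    proof (cases "F = {..<n}")
      case True then show ?thesis using n by (intro exI[of _ 0]) auto
    next
      case False
      then obtain i where i: "i < n" "i \<notin> F" using Fn by auto
      then have "F \<subseteq> {..<n} - {i}" using Fn by auto
      moreover have "card ({..<n} - {i}) \<le> card F" using i F by simp
      ultimately have "F = {..<n} - {i}"
        by (intro card_subset_eq) (auto intro: antisym card_mono)
      then show ?thesis using i by auto
    qed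
    then obtain i where i: "i < n" "{..<n} - {i} \<subseteq> F" by blast
    have "{..<n} - {i} \<in> faces n M" by (rule faces_subset_closed[OF MI F(1) i(2)])
    then show "\<exists>i<n. M \<subseteq> var_ideal n i"
      using sqfree_ideal_subset_var_ideal_iff[OF M i(1)] i(1) by auto
  qed
  also have "\<dots> \<longleftrightarrow> face_count n M (n - 1) \<noteq> 0 \<or> face_count n M n \<noteq> 0"
  proof
    assume "\<exists>F\<in>faces n M. n - 1 \<le> card F"
    then obtain F where F: "F \<in> faces n M" "n - 1 \<le> card F" by auto
    then have "card F = n - 1 \<or> card F = n" using card_face_le[OF F(1)] by linarith
    then show "face_count n M (n - 1) \<noteq> 0 \<or> face_count n M n \<noteq> 0"
      unfolding face_count_def using fin F(1) by (auto simp: card_eq_0_iff)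
  next
    assume "face_count n M (n - 1) \<noteq> 0 \<or> face_count n M n \<noteq> 0"
    then show "\<exists>F\<in>faces n M. n - 1 \<le> card F"
      unfolding face_count_def by (auto simp: card_eq_0_iff) (metis le_refl, metis diff_le_self)
  qed
  finally show ?thesis .
qed

section \<open>Counting monomials by support\<close>

definition supp_class :: "nat \<Rightarrow> nat set \<Rightarrow> nat \<Rightarrow> (nat \<Rightarrow> nat) set" where
  "supp_class n F D = {b \<in> monomials_deg n D. supp b = F}"

definition supp_count :: "nat \<Rightarrow> nat \<Rightarrow> nat \<Rightarrow> nat" where
  "supp_count n j D = card (supp_class n {..<j} D)"

lemma finite_supp_class: "finite (supp_class n F D)"
  by (rule finite_subset[OF _ finite_monomials_deg[of n D]]) (auto simp: supp_class_def)

lemma supp_class_rename: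
  assumes h: "bij_betw h A B" and A: "A \<subseteq> {..<n}" and B: "B \<subseteq> {..<n}"
  defines "\<phi> \<equiv> \<lambda>b y. if y \<in> A then b (h y) else 0"
  shows "\<phi> ` supp_class n B D \<subseteq> supp_class n A D" and "inj_on \<phi> (supp_class n B D)"
proof -
  have hB: "\<And>y. y \<in> A \<Longrightarrow> h y \<in> B" and onto: "\<And>x. x \<in> B \<Longrightarrow> \<exists>y\<in>A. x = h y"
    using h by (auto simp: bij_betw_def)
  show "\<phi> ` supp_class n B D \<subseteq> supp_class n A D"
  proof clarify
    fix b assume "b \<in> supp_class n B D"
    then have bm: "b \<in> monomials n" and sb: "supp b = B" and db: "mdeg n b = D"
      by (auto simp: supp_class_def monomials_deg_def)
    have m: "\<phi> b \<in> monomials n" using A by (auto simp: monomials_def \<phi>_def)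
    have s: "supp (\<phi> b) = A" using sb hB by (auto simp: supp_def \<phi>_def)
    have "mdeg n (\<phi> b) = (\<Sum>y\<in>A. b (h y))"
      using mdeg_eq_sum_over_supp[OF m _ A] s by (simp add: \<phi>_def)
    also have "\<dots> = sum b B" using h by (rule sum.reindex_bij_betw)
    also have "\<dots> = D" using mdeg_eq_sum_over_supp[OF bm _ B] sb db by simp
    finally show "\<phi> b \<in> supp_class n A D" using m s by (simp add: supp_class_def monomials_deg_def)
  qed
  show "inj_on \<phi> (supp_class n B D)"
  proof
    fix b c assume b: "b \<in> supp_class n B D" and c: "c \<in> supp_class n B D" and e: "\<phi> b = \<phi> c"
    show "b = c"
    proof
      fix x show "b x = c x"
      proof (cases "x \<in> B")
        case True
        then obtain y where "y \<in> A" "x = h y" using onto by blast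
        then show ?thesis using fun_cong[OF e, of y] by (simp add: \<phi>_def)
      next
        case False
        then show ?thesis using b c by (auto simp: supp_class_def supp_def)
      qed
    qed
  qed
qed

lemma card_supp_class:
  assumes F: "F \<subseteq> {..<n}"
  shows "card (supp_class n F D) = supp_count n (card F) D"
proof -
  have "finite F" using F finite_subset by blast
  then obtain h where h: "bij_betw h {..<card F} F"
    using ex_bij_betw_nat_finite[of F] unfolding atLeast0LessThan by blast
  have cardF: "{..<card F} \<subseteq> {..<n}" using card_mono[OF _ F] by auto
  have h': "bij_betw (inv_into {..<card F} h) F {..<card F}" using h by (rule bij_betw_inv_into)
  have "card (supp_class n F D) \<le> card (supp_class n {..<card F} D)"
    using supp_class_rename[OF h cardF F] by (intro card_inj_on_le finite_supp_class)
  moreover have "card (supp_class n {..<card F} D) \<le> card (supp_class n F D)"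
    using supp_class_rename[OF h' F cardF] by (intro card_inj_on_le finite_supp_class)
  ultimately show ?thesis unfolding supp_count_def by simp
qed

lemma supp_count_below_size:
  assumes "j \<le> n" and "D < j"
  shows "supp_count n j D = 0"
proof -
  have "b \<notin> supp_class n {..<j} D" for b
  proof
    assume "b \<in> supp_class n {..<j} D"
    then have bm: "b \<in> monomials n" and sb: "supp b = {..<j}" and db: "mdeg n b = D"
      by (auto simp: supp_class_def monomials_deg_def)
    have "1 \<le> b y" if "y < j" for y
      using that sb unfolding supp_def by (metis (mono_tags) lessThan_iff mem_Collect_eq less_one not_le)
    then have "(\<Sum>y<j. (1::nat)) \<le> sum b {..<j}" by (intro sum_mono) simp
    also have "\<dots> = D" using mdeg_eq_sum_over_supp[OF bm, of "{..<j}"] sb db assms(1) by simp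
    finally show False using assms(2) by simp
  qed
  then have "supp_class n {..<j} D = {}" by blast
  then show ?thesis unfolding supp_count_def by simp
qed

lemma supp_count_at_size:
  assumes "j \<le> n"
  shows "supp_count n j j > 0"
proof -
  have m: "sqmon {..<j} \<in> monomials n" using assms by (intro sqmon_in_monomials) auto
  have "mdeg n (sqmon {..<j}) = sum (sqmon {..<j}) {..<j}"
    using m assms by (intro mdeg_eq_sum_over_supp) (auto simp: supp_sqmon)
  also have "\<dots> = j" by (simp add: sqmon_def)
  finally have "sqmon {..<j} \<in> supp_class n {..<j} j"
    using m by (simp add: supp_class_def monomials_deg_def supp_sqmon)
  then show ?thesis unfolding supp_count_def using finite_supp_class by (auto simp: card_gt_0_iff)
qed

text \<open>The number of degree-D monomials outside a squarefree ideal M, computed by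
  grouping them according to their support, which is a face of M.\<close>
lemma card_monomials_outside:
  assumes M: "is_sqfree_monomial_ideal n M"
  shows "card (monomials_deg n D - M) = (\<Sum>j\<le>n. face_count n M j * supp_count n j D)"
proof -
  have "monomials_deg n D - M = (\<Union>F\<in>faces n M. supp_class n F D)"
  proof -
    have "b \<in> monomials_deg n D - M \<longleftrightarrow> b \<in> monomials_deg n D \<and> supp b \<in> faces n M" for b
      using sqfree_ideal_mem_iff_supp[OF M, of b] supp_subset_vars[of b n]
      by (auto simp: faces_def monomials_deg_def)
    then show ?thesis by (auto simp: supp_class_def)
  qed
  then have "card (monomials_deg n D - M) = (\<Sum>F\<in>faces n M. card (supp_class n F D))"
    by (simp only:) (rule card_UN_disjoint[OF finite_faces], simp add: finite_supp_class, auto simp: supp_class_def)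
  also have "\<dots> = (\<Sum>F\<in>faces n M. supp_count n (card F) D)"
    by (intro sum.cong refl card_supp_class) (auto simp: faces_def)
  also have "\<dots> = (\<Sum>j\<le>n. \<Sum>F\<in>{F \<in> faces n M. card F = j}. supp_count n (card F) D)"
    by (rule sum.group[symmetric]) (auto simp: finite_faces card_face_le)
  also have "\<dots> = (\<Sum>j\<le>n. face_count n M j * supp_count n j D)"
    by (intro sum.cong refl) (simp add: face_count_def)
  finally show ?thesis .
qed

lemma card_monomials_outside_hilb:
  assumes M: "is_monomial_ideal n M"
  shows "card (monomials_deg n D - M) = card (monomials_deg n D) - hilb n M D"
proof -
  have "{a\<in>M. mdeg n a = D} = monomials_deg n D \<inter> M"
    using M by (auto simp: is_monomial_ideal_def monomials_deg_def)
  then show ?thesis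
    by (simp add: hilb_def card_Diff_subset_Int finite_monomials_deg)
qed

section \<open>The Hilbert function determines the face counts\<close>

lemma triangular_system_unique:
  fixes a b :: "nat \<Rightarrow> nat" and g :: "nat \<Rightarrow> nat \<Rightarrow> nat"
  assumes vanish: "\<And>k D. k \<le> n \<Longrightarrow> D < k \<Longrightarrow> g k D = 0"
    and diagonal: "\<And>j. j \<le> n \<Longrightarrow> g j j > 0"
    and sums_eq: "\<And>D. (\<Sum>k\<le>n. a k * g k D) = (\<Sum>k\<le>n. b k * g k D)"
  shows "j \<le> n \<Longrightarrow> a j = b j"
proof (induction j rule: less_induct)
  case (less j)
  have split: "(\<Sum>k\<le>n. c k * g k j) = (\<Sum>k<j. c k * g k j) + c j * g j j" for c :: "nat \<Rightarrow> nat"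
  proof -
    have "(\<Sum>k\<le>n. c k * g k j) = (\<Sum>k\<le>j. c k * g k j)"
      using less.prems vanish by (intro sum.mono_neutral_right) auto
    then show ?thesis by (simp add: lessThan_Suc_atMost[symmetric])
  qed
  have "(\<Sum>k<j. a k * g k j) = (\<Sum>k<j. b k * g k j)"
    using less by (intro sum.cong refl) auto
  then have "a j * g j j = b j * g j j" using sums_eq[of j] split[of a] split[of b] by linarith
  then show ?case using diagonal[OF less.prems] by simp
qed

lemma face_count_eq_of_hilb_eq:
  assumes I: "is_sqfree_monomial_ideal n I" and J: "is_sqfree_monomial_ideal n J"
    and hilb_eq: "\<And>D. hilb n I D = hilb n J D"
  shows "j \<le> n \<Longrightarrow> face_count n I j = face_count n J j"
proof (rule triangular_system_unique[where g = "supp_count n" and a = "face_count n I" and b = "face_count n J"])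
  show "\<And>k D. k \<le> n \<Longrightarrow> D < k \<Longrightarrow> supp_count n k D = 0" by (rule supp_count_below_size)
  show "\<And>j. j \<le> n \<Longrightarrow> supp_count n j j > 0" by (rule supp_count_at_size)
  have "is_monomial_ideal n I" "is_monomial_ideal n J"
    using I J by (auto simp: is_sqfree_monomial_ideal_def)
  then show "(\<Sum>k\<le>n. face_count n I k * supp_count n k D) = (\<Sum>k\<le>n. face_count n J k * supp_count n k D)"
    for D
    using card_monomials_outside[OF I, of D] card_monomials_outside[OF J, of D]
      card_monomials_outside_hilb hilb_eq by metis
qed

section \<open>Lex ideals and the variable x_1\<close>

text \<open>A squarefree lex ideal contained in some variable ideal (x_(i+1)) is contained
  in (x_1): the face {..<n} - {i} makes the lex-smaller set {..<n} - {0} a face.\<close>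
lemma sqfree_lex_in_some_var_imp_in_first:
  assumes lex: "is_sqfree_lex n L" and i: "i < n" and Li: "L \<subseteq> var_ideal n i"
  shows "L \<subseteq> var_ideal n 0"
proof -
  have L: "is_sqfree_monomial_ideal n L" using lex by (simp add: is_sqfree_lex_def)
  define A where "A = {..<n} - {0}"
  define B where "B = {..<n} - {i}"
  have nB: "sqmon B \<notin> L" using sqfree_ideal_subset_var_ideal_iff[OF L i] Li
    by (simp add: B_def faces_def)
  have "sqmon A \<notin> L"
  proof (cases "i = 0")
    case True then show ?thesis using nB by (simp add: A_def B_def)
  next
    case False
    have "(A - B) \<union> (B - A) = {0, i}" using False i by (auto simp: A_def B_def)
    then have "sq_lex_gt B A" using False by (auto simp: sq_lex_gt_def A_def B_def)
    moreover have "card A = card B" using i by (simp add: A_def B_def)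
    moreover have "A \<subseteq> {..<n}" "B \<subseteq> {..<n}" by (auto simp: A_def B_def)
    ultimately show ?thesis using lex nB unfolding is_sqfree_lex_def by blast
  qed
  then show ?thesis
    using sqfree_ideal_subset_var_ideal_iff[OF L, of 0] i by (simp add: A_def faces_def)
qed

theorem lemma3p5:
  fixes n :: nat and I L :: "(nat \<Rightarrow> nat) set"
  assumes "1 \<le> n"
    and "is_sqfree_monomial_ideal n I"
    and "is_sqfree_lexification n I L"
  shows "L \<subseteq> var_ideal n 0 \<longleftrightarrow> (\<exists>i<n. I \<subseteq> var_ideal n i)"
proof -
  have lex: "is_sqfree_lex n L" and hilb_eq: "\<And>D. hilb n I D = hilb n L D"
    using assms(3) by (auto simp: is_sqfree_lexification_def)
  have L: "is_sqfree_monomial_ideal n L" using lex by (simp add: is_sqfree_lex_def)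
  have counts: "face_count n I j = face_count n L j" if "j \<le> n" for j
    using face_count_eq_of_hilb_eq[OF assms(2) L hilb_eq that] .
  have "(\<exists>i<n. I \<subseteq> var_ideal n i) \<longleftrightarrow> (\<exists>i<n. L \<subseteq> var_ideal n i)"
    unfolding sqfree_ideal_in_some_var_iff_face_count[OF assms(2,1)]
      sqfree_ideal_in_some_var_iff_face_count[OF L assms(1)]
    using counts[of n] counts[of "n - 1"] by simp
  moreover have "(\<exists>i<n. L \<subseteq> var_ideal n i) \<longleftrightarrow> L \<subseteq> var_ideal n 0"
    using sqfree_lex_in_some_var_imp_in_first[OF lex] assms(1) by (auto intro: exI[of _ 0])
  ultimately show ?thesis by simp
qed

end
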